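(* Let $a>1$ and $b>1$ be irrational numbers, and let $a_n=[an]$ and $b_n=[bn]$ for positive integers $n$. Then $$\lim_{k \to \infty}\frac{1}{k} \sum_{n=1}^\infty \left(\frac{a_{n+k}}{a_n}-\frac{b_{n+k}}{b_n}\right) + \sum_{n=1}^{\infty}\frac{a \{a^{-1} (n+1)\}-b\{b^{-1}(n+1)\}}{n(n+1)}= \log\frac{a}{b}.$$
   Context: For a real number $x$, $[x]$ denotes the greatest integer not exceeding $x$ and $\{x\}=x-[x]$ its fractional part. Here $k$ ranges over positive integers. *)

theory Defs
  imports Complex_Main
begin

definition beatty :: "real \<Rightarrow> nat \<Rightarrow> real" where
  "beatty x n = real_of_int \<lfloor>x * real n\<rfloor>"

definition ratio_term :: "real \<Rightarrow> real \<Rightarrow> nat \<Rightarrow> nat \<Rightarrow> real" where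
  "ratio_term a b k n = beatty a (n + k) / beatty a n - beatty b (n + k) / beatty b n"

definition frac_term :: "real \<Rightarrow> real \<Rightarrow> nat \<Rightarrow> real" where
  "frac_term a b n = (a * frac (real (n + 1) / a) - b * frac (real (n + 1) / b))
                     / (real n * real (n + 1))"

end

theory Submission
  imports Defs "HOL-Analysis.Harmonic_Numbers" "HOL-Real_Asymp.Real_Asymp"
begin

(* The term a_{n+k}/a_n - (n+k)/n equals
   k (a/a_n - 1/n), plus the telescoping difference G_n - G_{n+k} of the defect
   G_n = a n/a_n - 1 in [0, 1/n], minus a nonnegative remainder of size at most
   (a k + 1)/(n (n+k)).  Summed over n the last two parts are O(log k), so the k-th mean
   tends to D_a = sum_n (a/a_n - 1/n).  As a is irrational, [(m+1)/a] - [m/a] is the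
   indicator of the Beatty set {a_n}, so sum_{n<=N} 1/a_n = sum_{m<=a_N} ([(m+1)/a] - [m/a])/m,
   and Abel summation with [x] = x - {x} gives D_a = log a + 1 - sum_m a{(m+1)/a}/(m(m+1)).
   The theorem is D_a - D_b: the terms (n+k)/n cancel. *)

lemma sums_diff_shift:
  fixes g :: "nat \<Rightarrow> 'a::real_normed_vector"
  assumes "g \<longlonglongrightarrow> 0"
  shows "(\<lambda>n. g n - g (n + k)) sums (\<Sum>i<k. g i)"
proof -
  have "(\<lambda>n. g (n + i) - g (Suc n + i)) sums g i" for i
    using telescope_sums'[OF LIMSEQ_ignore_initial_segment[OF assms, of i]] by simp
  then have "(\<lambda>n. \<Sum>i<k. g (n + i) - g (Suc n + i)) sums (\<Sum>i<k. g i)"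
    by (rule sums_sum)
  moreover have "(\<Sum>i<k. g (n + i) - g (Suc n + i)) = g n - g (n + k)" for n
    using sum_lessThan_telescope'[of "\<lambda>i. g (n + i)" k] by simp
  ultimately show ?thesis by simp
qed

lemma harm_sums_shift: "(\<lambda>n. 1 / real (n + 1) - 1 / real (n + 1 + k)) sums harm k"
proof -
  have "(\<lambda>n. 1 / real (n + 1)) \<longlonglongrightarrow> 0"
    using LIMSEQ_Suc[OF lim_inverse_n'] by simp
  from sums_diff_shift[OF this, of k] show ?thesis
    by (simp add: harm_altdef add_ac divide_inverse)
qed

lemma harm_div_tendsto_0: "(\<lambda>k. harm k / real k) \<longlonglongrightarrow> (0::real)"
proof -
  have "(\<lambda>k. (harm k - ln (real k)) * (1 / real k) + ln (real k) / real k)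
          \<longlonglongrightarrow> euler_mascheroni * 0 + 0"
    by (intro tendsto_add tendsto_mult euler_mascheroni_LIMSEQ) real_asymp+
  then show ?thesis by (simp add: diff_divide_distrib)
qed

lemma harm_diff_tendsto_ln:
  fixes f :: "nat \<Rightarrow> nat"
  assumes "strict_mono f" and ratio: "(\<lambda>n. real (f n) / real n) \<longlonglongrightarrow> c" and "0 < c"
  shows "(\<lambda>n. harm (f n) - harm n :: real) \<longlonglongrightarrow> ln c"
proof -
  have euler: "(\<lambda>n. harm (f n) - ln (real (f n))) \<longlonglongrightarrow> (euler_mascheroni :: real)"
    using LIMSEQ_subseq_LIMSEQ[OF euler_mascheroni_LIMSEQ \<open>strict_mono f\<close>] by (simp add: o_def)
  have "(\<lambda>n. (harm (f n) - ln (real (f n))) - (harm n - ln (real n)) + ln (real (f n) / real n))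
      \<longlonglongrightarrow> euler_mascheroni - euler_mascheroni + ln c"
    using \<open>0 < c\<close> by (intro tendsto_add tendsto_diff tendsto_ln euler euler_mascheroni_LIMSEQ ratio) simp
  then have "(\<lambda>n. (harm (f n) - ln (real (f n))) - (harm n - ln (real n)) + ln (real (f n) / real n))
      \<longlonglongrightarrow> ln c"
    by simp
  moreover have "\<forall>\<^sub>F n in sequentially.
      (harm (f n) - ln (real (f n))) - (harm n - ln (real n)) + ln (real (f n) / real n)
      = harm (f n) - harm n"
  proof (rule eventually_sequentiallyI[of 1])
    fix n :: nat
    assume "1 \<le> n"
    moreover have "n \<le> f n" using \<open>strict_mono f\<close> by (rule strict_mono_imp_increasing)
    ultimately show "(harm (f n) - ln (real (f n))) - (harm n - ln (real n)) + ln (real (f n) / real n)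
        = harm (f n) - harm n"
      by (simp add: ln_div)
  qed
  ultimately show ?thesis by (rule Lim_transform_eventually)
qed

locale beatty_seq =
  fixes a :: real
  assumes gt_1: "1 < a"
begin

lemma real_le_beatty: "real n \<le> beatty a n"
proof -
  have "real n \<le> a * real n" using gt_1 by (simp add: mult_le_cancel_right1)
  then have "\<lfloor>real n\<rfloor> \<le> \<lfloor>a * real n\<rfloor>" by (rule floor_mono)
  then show ?thesis unfolding beatty_def by simp
qed

lemma beatty_le: "beatty a n \<le> a * real n"
  unfolding beatty_def by simp

lemma beatty_gt: "a * real n - 1 < beatty a n"
  unfolding beatty_def by linarith

lemma beatty_pos: "1 \<le> n \<Longrightarrow> 0 < beatty a n"
  using real_le_beatty[of n] by simp

lemma beatty_mono: "m \<le> n \<Longrightarrow> beatty a m \<le> beatty a n"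
  unfolding beatty_def using gt_1 by (simp add: floor_mono)

lemma beatty_Suc_ge: "beatty a n + 1 \<le> beatty a (Suc n)"
proof -
  have "a * real n + 1 \<le> a * real (Suc n)" using gt_1 by (simp add: algebra_simps)
  then show ?thesis unfolding beatty_def by (metis floor_add_int floor_mono of_int_1 of_int_add of_int_le_iff)
qed

definition beatty_nat :: "nat \<Rightarrow> nat" where
  "beatty_nat n = nat \<lfloor>a * real n\<rfloor>"

lemma of_nat_beatty_nat: "real (beatty_nat n) = beatty a n"
  using real_le_beatty[of n] unfolding beatty_nat_def beatty_def by simp

lemma beatty_nat_less_Suc: "beatty_nat n < beatty_nat (Suc n)"
  using beatty_Suc_ge[of n] unfolding of_nat_beatty_nat[symmetric] by simp

lemma strict_mono_beatty_nat: "strict_mono beatty_nat"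
  using beatty_nat_less_Suc by (simp add: strict_mono_Suc_iff)

lemma beatty_div_tendsto: "(\<lambda>n. beatty a n / real n) \<longlonglongrightarrow> a"
proof (rule tendsto_sandwich)
  show "eventually (\<lambda>n. a - 1 / real n \<le> beatty a n / real n) sequentially"
  proof (rule eventually_sequentiallyI[of 1])
    fix n :: nat assume "1 \<le> n"
    then have "(a * real n - 1) / real n \<le> beatty a n / real n"
      using beatty_gt[of n] by (intro divide_right_mono) auto
    with \<open>1 \<le> n\<close> show "a - 1 / real n \<le> beatty a n / real n"
      by (simp add: diff_divide_distrib)
  qed
  show "eventually (\<lambda>n. beatty a n / real n \<le> a) sequentially"
    using beatty_le gt_1 by (intro always_eventually allI) (simp add: divide_le_eq mult.commute)
  show "(\<lambda>n. a - 1 / real n) \<longlonglongrightarrow> a"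
    using tendsto_diff[OF tendsto_const lim_inverse_n', of a] by simp
qed simp

text \<open>For irrational \<open>a\<close> this is \<open>1\<close> if \<open>m\<close> is a value \<open>\<lfloor>a n\<rfloor>\<close> and \<open>0\<close> otherwise.\<close>

definition beatty_indicator :: "nat \<Rightarrow> real" where
  "beatty_indicator m = of_int \<lfloor>real (m + 1) / a\<rfloor> - of_int \<lfloor>real m / a\<rfloor>"

definition frac_weight :: "nat \<Rightarrow> real" where
  "frac_weight m = a * frac (real (m + 1) / a) / (real m * real (m + 1))"

lemma sum_beatty_indicator_div:
  "(\<Sum>m=1..M. beatty_indicator m / real m)
     = harm M / a - (\<Sum>m=1..M. frac_weight m) / a + of_int \<lfloor>real (M + 1) / a\<rfloor> / real (M + 1)"
proof -
  define F where "F j = of_int \<lfloor>real j / a\<rfloor> / real j" for j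
  \<comment> \<open>Abel summation, writing \<open>\<lfloor>(m + 1) / a\<rfloor> = (m + 1) / a - frac ((m + 1) / a)\<close>\<close>
  have summand: "beatty_indicator m / real m
      = inverse (real m) / a - frac_weight m / a + (F (Suc m) - F m)" if "1 \<le> m" for m
  proof -
    define p where "p = real m"
    define f where "f = frac (real (m + 1) / a)"
    define y :: real where "y = of_int \<lfloor>real m / a\<rfloor>"
    have indicator: "beatty_indicator m = (1 + p) / a - f - y"
      by (simp add: beatty_indicator_def p_def f_def y_def frac_def)
    have weight: "frac_weight m = a * f / (p * (1 + p))"
      by (simp add: frac_weight_def p_def f_def)
    have F_eqs: "F (Suc m) = ((1 + p) / a - f) / (1 + p)" "F m = y / p"
      by (simp_all add: F_def p_def f_def y_def frac_def)
    have "0 < p" using that by (simp add: p_def)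
    then show ?thesis
      using gt_1 unfolding indicator weight F_eqs p_def[symmetric]
      by (simp add: divide_simps) (simp add: algebra_simps)
  qed
  have "(\<Sum>m=1..M. F (Suc m) - F m) = F (Suc M) - F 1"
    by (rule sum_Suc_diff) simp
  moreover have "F 1 = 0" using gt_1 by (simp add: F_def floor_eq_iff)
  ultimately have telescope: "(\<Sum>m=1..M. F (Suc m) - F m) = F (Suc M)" by linarith
  have "(\<Sum>m=1..M. beatty_indicator m / real m)
      = (\<Sum>m=1..M. inverse (real m) / a - frac_weight m / a + (F (Suc m) - F m))"
    by (rule sum.cong) (simp_all add: summand)
  also have "\<dots> = harm M / a - (\<Sum>m=1..M. frac_weight m) / a + F (Suc M)"
    unfolding sum.distrib telescope by (simp add: sum_subtractf sum_divide_distrib harm_def)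
  finally show ?thesis by (simp add: F_def)
qed

lemma frac_weight_nonneg: "0 \<le> frac_weight m"
  using gt_1 unfolding frac_weight_def by simp

lemma frac_weight_le:
  assumes "1 \<le> m"
  shows "frac_weight m \<le> a * (1 / real m - 1 / real (m + 1))"
proof -
  have "frac_weight m \<le> a * 1 / (real m * real (m + 1))"
    unfolding frac_weight_def using gt_1 frac_lt_1[of "real (m + 1) / a"]
    by (intro divide_right_mono mult_left_mono) auto
  with assms show ?thesis by (simp add: field_simps)
qed

lemma summable_frac_weight: "summable (\<lambda>m. frac_weight (m + 1))"
proof (rule summable_comparison_test')
  show "summable (\<lambda>m. a * (1 / real (m + 1) - 1 / real (m + 1 + 1)))"
    using harm_sums_shift[of 1] by (intro summable_mult) (auto simp: sums_iff)
  show "norm (frac_weight (m + 1)) \<le> a * (1 / real (m + 1) - 1 / real (m + 1 + 1))" for m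
    using frac_weight_nonneg frac_weight_le[of "m + 1"] by simp
qed

definition shift_ratio :: "nat \<Rightarrow> nat \<Rightarrow> real" where
  "shift_ratio k n = beatty a (n + k) / beatty a n - real (n + k) / real n"

definition defect :: "nat \<Rightarrow> real" where
  "defect n = a * real n / beatty a n - 1"

definition shift_remainder :: "nat \<Rightarrow> nat \<Rightarrow> real" where
  "shift_remainder k n = defect (n + k) * (beatty a (n + k) - beatty a n) / beatty a n"

lemma defect_nonneg: "1 \<le> n \<Longrightarrow> 0 \<le> defect n"
  using beatty_pos[of n] beatty_le[of n] by (simp add: defect_def le_divide_eq)

lemma defect_le:
  assumes "1 \<le> n"
  shows "defect n \<le> 1 / real n"
proof -
  have "defect n = (a * real n - beatty a n) / beatty a n"
    using beatty_pos[OF assms] by (simp add: defect_def diff_divide_distrib)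
  also have "\<dots> \<le> 1 / beatty a n"
    using beatty_pos[OF assms] beatty_gt[of n] by (intro divide_right_mono) auto
  also have "\<dots> \<le> 1 / real n"
    using real_le_beatty[of n] assms by (intro divide_left_mono) auto
  finally show ?thesis .
qed

lemma defect_tendsto_0: "(\<lambda>n. defect (n + 1)) \<longlonglongrightarrow> 0"
proof (rule tendsto_sandwich)
  show "\<forall>\<^sub>F n in sequentially. 0 \<le> defect (n + 1)"
    by (simp add: defect_nonneg)
  show "\<forall>\<^sub>F n in sequentially. defect (n + 1) \<le> 1 / real (n + 1)"
    by (intro always_eventually allI defect_le) simp
  show "(\<lambda>n. 1 / real (n + 1)) \<longlonglongrightarrow> 0"
    using LIMSEQ_Suc[OF lim_inverse_n'] by simp
qed simp

lemma shift_ratio_eq: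
  assumes "1 \<le> n"
  shows "shift_ratio k n = real k * (a / beatty a n - 1 / real n) + (defect n - defect (n + k))
           - shift_remainder k n"
proof -
  have "0 < beatty a n" "0 < beatty a (n + k)" "0 < real n"
    using assms beatty_pos[of n] beatty_pos[of "n + k"] by simp_all
  then show ?thesis
    unfolding shift_ratio_def defect_def shift_remainder_def by (simp add: field_simps)
qed

lemma shift_remainder_nonneg: "1 \<le> n \<Longrightarrow> 0 \<le> shift_remainder k n"
  unfolding shift_remainder_def
  using defect_nonneg[of "n + k"] beatty_mono[of n "n + k"] beatty_pos[of n] by simp

lemma shift_remainder_le:
  assumes "1 \<le> n"
  shows "shift_remainder k n \<le> (a * real k + 1) / (real n * real (n + k))"
proof -
  have "beatty a (n + k) - beatty a n \<le> a * real k + 1"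
    using beatty_le[of "n + k"] beatty_gt[of n] by (simp add: algebra_simps)
  then have "defect (n + k) * (beatty a (n + k) - beatty a n) \<le> 1 / real (n + k) * (a * real k + 1)"
    using assms defect_nonneg[of "n + k"] defect_le[of "n + k"] beatty_mono[of n "n + k"]
    by (intro mult_mono) simp_all
  then have "shift_remainder k n \<le> 1 / real (n + k) * (a * real k + 1) / beatty a n"
    unfolding shift_remainder_def using beatty_pos[OF assms] by (intro divide_right_mono) simp_all
  also have "\<dots> \<le> 1 / real (n + k) * (a * real k + 1) / real n"
    using assms real_le_beatty[of n] gt_1 by (intro divide_left_mono) simp_all
  finally show ?thesis by (simp add: mult.commute)
qed

lemma shift_remainder_summable_bound:
  assumes "1 \<le> k"
  shows "summable (\<lambda>n. shift_remainder k (n + 1))"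
    and "(\<Sum>n. shift_remainder k (n + 1)) \<le> (a + 1) * harm k"
proof -
  have "0 < real k" using assms by simp
  define c where "c = (a * real k + 1) / real k"
  have tel: "(\<lambda>n. c * (1 / real (n + 1) - 1 / real (n + 1 + k))) sums (c * harm k)"
    by (rule sums_mult[OF harm_sums_shift])
  have le: "shift_remainder k (n + 1) \<le> c * (1 / real (n + 1) - 1 / real (n + 1 + k))" for n
  proof -
    have "1 / real (n + 1) - 1 / real (n + 1 + k) = real k / (real (n + 1) * real (n + 1 + k))"
      by (simp add: field_simps)
    then have "c * (1 / real (n + 1) - 1 / real (n + 1 + k))
        = (a * real k + 1) / (real (n + 1) * real (n + 1 + k))"
      using \<open>0 < real k\<close> by (simp add: c_def)
    then show ?thesis using shift_remainder_le[of "n + 1" k] by simp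
  qed
  show summable: "summable (\<lambda>n. shift_remainder k (n + 1))"
    by (rule summable_comparison_test'[OF sums_summable[OF tel]]) (use le shift_remainder_nonneg in simp)
  have "(\<Sum>n. shift_remainder k (n + 1)) \<le> c * harm k"
    using suminf_le[OF le summable sums_summable[OF tel]] tel by (simp add: sums_iff)
  also have "\<dots> \<le> (a + 1) * harm k"
    using \<open>0 < real k\<close> assms by (intro mult_right_mono harm_nonneg) (simp add: c_def field_simps)
  finally show "(\<Sum>n. shift_remainder k (n + 1)) \<le> (a + 1) * harm k" .
qed

end

locale irrational_beatty_seq = beatty_seq +
  assumes irrational: "a \<notin> \<rat>"
begin

lemma floor_Suc_div_eq:
  assumes "beatty_nat n \<le> m" and "m < beatty_nat (Suc n)"
  shows "\<lfloor>real (m + 1) / a\<rfloor> = int n"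
proof -
  have "beatty a n \<le> real m" "real m + 1 \<le> beatty a (Suc n)"
    using assms unfolding of_nat_beatty_nat[symmetric] by simp_all
  then have lower: "a * real n < real m + 1" and "real m + 1 \<le> a * real (Suc n)"
    using beatty_gt[of n] beatty_le[of "Suc n"] by linarith+
  moreover have "real m + 1 \<noteq> a * real (Suc n)"
  proof
    assume "real m + 1 = a * real (Suc n)"
    then have "a = (real m + 1) / real (Suc n)" by (simp add: field_simps)
    with irrational show False by simp
  qed
  ultimately have "real m + 1 < a * real (Suc n)" by simp
  then have "real (m + 1) / a < real n + 1"
    using gt_1 by (simp add: pos_divide_less_eq algebra_simps)
  moreover have "real n \<le> real (m + 1) / a"
    using lower gt_1 by (simp add: pos_le_divide_eq algebra_simps)
  ultimately show ?thesis by (intro floor_unique) simp_all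
qed

lemma beatty_indicator_eq_0:
  assumes "beatty_nat n < m" and "m < beatty_nat (Suc n)"
  shows "beatty_indicator m = 0"
proof -
  have "\<lfloor>real (m - 1 + 1) / a\<rfloor> = \<lfloor>real (m + 1) / a\<rfloor>"
    using floor_Suc_div_eq[of n "m - 1"] floor_Suc_div_eq[of n m] assms by simp
  moreover have "m - 1 + 1 = m" using assms by simp
  ultimately show ?thesis unfolding beatty_indicator_def by simp
qed

lemma beatty_indicator_beatty_nat: "beatty_indicator (beatty_nat (Suc n)) = 1"
proof -
  define m where "m = beatty_nat (Suc n)"
  have "beatty_nat n < m" unfolding m_def by (rule beatty_nat_less_Suc)
  have "\<lfloor>real (m + 1) / a\<rfloor> = int (Suc n)"
    by (rule floor_Suc_div_eq) (simp_all add: m_def beatty_nat_less_Suc)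
  moreover have "\<lfloor>real (m - 1 + 1) / a\<rfloor> = int n"
    using \<open>beatty_nat n < m\<close> by (intro floor_Suc_div_eq) (simp_all add: m_def)
  moreover have "m - 1 + 1 = m" using \<open>beatty_nat n < m\<close> by simp
  ultimately show ?thesis unfolding beatty_indicator_def m_def[symmetric] by simp
qed

lemma sum_inverse_beatty:
  "(\<Sum>n=1..N. 1 / beatty a n) = (\<Sum>m=1..beatty_nat N. beatty_indicator m / real m)"
proof (induction N)
  case 0
  show ?case by (simp add: beatty_nat_def)
next
  case (Suc N)
  let ?B = beatty_nat
  have less: "?B N < ?B (Suc N)" by (rule beatty_nat_less_Suc)
  have "(\<Sum>m\<in>{?B N<..<?B (Suc N)}. beatty_indicator m / real m) = 0"
    using beatty_indicator_eq_0 by (intro sum.neutral) auto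
  moreover have "{?B N<..?B (Suc N)} = insert (?B (Suc N)) {?B N<..<?B (Suc N)}"
    using less by auto
  ultimately have block: "(\<Sum>m\<in>{?B N<..?B (Suc N)}. beatty_indicator m / real m) = 1 / beatty a (Suc N)"
    by (simp add: beatty_indicator_beatty_nat of_nat_beatty_nat)
  have split: "{1..?B (Suc N)} = {1..?B N} \<union> {?B N<..?B (Suc N)}"
    using less by auto
  have "(\<Sum>m=1..?B (Suc N). beatty_indicator m / real m)
      = (\<Sum>m=1..?B N. beatty_indicator m / real m) + (\<Sum>m\<in>{?B N<..?B (Suc N)}. beatty_indicator m / real m)"
    unfolding split by (rule sum.union_disjoint) auto
  with Suc block show ?case by simp
qed

lemma sum_reciprocal_beatty:
  "(\<Sum>n=1..N. a / beatty a n)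
     = harm (beatty_nat N) - (\<Sum>m=1..beatty_nat N. frac_weight m) + a * real N / (beatty a N + 1)"
proof -
  have "\<lfloor>real (beatty_nat N + 1) / a\<rfloor> = int N"
    by (rule floor_Suc_div_eq) (simp_all add: beatty_nat_less_Suc)
  then have "(\<Sum>n=1..N. 1 / beatty a n)
      = harm (beatty_nat N) / a - (\<Sum>m=1..beatty_nat N. frac_weight m) / a + real N / (beatty a N + 1)"
    unfolding sum_inverse_beatty sum_beatty_indicator_div by (simp add: of_nat_beatty_nat)
  moreover have "(\<Sum>n=1..N. a / beatty a n) = a * (\<Sum>n=1..N. 1 / beatty a n)"
    by (simp add: sum_distrib_left)
  ultimately show ?thesis
    using gt_1 by (simp add: field_simps)
qed

lemma reciprocal_beatty_sums:
  "(\<lambda>n. a / beatty a (n + 1) - 1 / real (n + 1)) sums (ln a + 1 - (\<Sum>m. frac_weight (m + 1)))"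
proof -
  have partial: "(\<Sum>n<N. a / beatty a (n + 1) - 1 / real (n + 1))
      = (harm (beatty_nat N) - harm N) - (\<Sum>m<beatty_nat N. frac_weight (m + 1))
        + a / (beatty a N / real N + 1 / real N)"
    if "1 \<le> N" for N
  proof -
    have "(\<Sum>n<N. a / beatty a (n + 1) - 1 / real (n + 1)) = (\<Sum>n=1..N. a / beatty a n) - harm N"
      by (simp add: sum.atLeast1_atMost_eq sum_subtractf harm_def divide_inverse)
    also have "a * real N / (beatty a N + 1) = a / (beatty a N / real N + 1 / real N)"
      using that by (simp add: field_simps)
    then have "(\<Sum>n=1..N. a / beatty a n) = harm (beatty_nat N)
        - (\<Sum>m<beatty_nat N. frac_weight (m + 1)) + a / (beatty a N / real N + 1 / real N)"
      unfolding sum_reciprocal_beatty by (simp add: sum.atLeast1_atMost_eq)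
    finally show ?thesis by simp
  qed
  have "(\<lambda>N. (harm (beatty_nat N) - harm N) - (\<Sum>m<beatty_nat N. frac_weight (m + 1))
        + a / (beatty a N / real N + 1 / real N))
      \<longlonglongrightarrow> ln a - (\<Sum>m. frac_weight (m + 1)) + a / (a + 0)"
    using LIMSEQ_subseq_LIMSEQ[OF summable_LIMSEQ[OF summable_frac_weight] strict_mono_beatty_nat] gt_1
    by (intro tendsto_add tendsto_diff tendsto_divide tendsto_const harm_diff_tendsto_ln
        strict_mono_beatty_nat beatty_div_tendsto lim_inverse_n')
      (simp_all add: o_def of_nat_beatty_nat beatty_div_tendsto)
  then have "(\<lambda>N. (harm (beatty_nat N) - harm N) - (\<Sum>m<beatty_nat N. frac_weight (m + 1))
        + a / (beatty a N / real N + 1 / real N))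
      \<longlonglongrightarrow> ln a + 1 - (\<Sum>m. frac_weight (m + 1))"
    by (rule tendsto_eq_rhs) (use gt_1 in simp)
  then have "(\<lambda>N. \<Sum>n<N. a / beatty a (n + 1) - 1 / real (n + 1))
      \<longlonglongrightarrow> ln a + 1 - (\<Sum>m. frac_weight (m + 1))"
    by (rule Lim_transform_eventually) (use partial in \<open>auto intro: eventually_sequentiallyI[of 1]\<close>)
  then show ?thesis unfolding sums_def .
qed

lemma shift_ratio_sums:
  assumes "1 \<le> k"
  shows "(\<lambda>n. shift_ratio k (n + 1)) sums
           (real k * (ln a + 1 - (\<Sum>m. frac_weight (m + 1))) + (\<Sum>i<k. defect (i + 1))
             - (\<Sum>n. shift_remainder k (n + 1)))"
proof -
  have "(\<lambda>n. defect (n + 1) - defect (n + 1 + k)) sums (\<Sum>i<k. defect (i + 1))"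
    using sums_diff_shift[OF defect_tendsto_0, of k] by (simp add: add_ac)
  then have "(\<lambda>n. real k * (a / beatty a (n + 1) - 1 / real (n + 1))
      + (defect (n + 1) - defect (n + 1 + k)) - shift_remainder k (n + 1))
      sums (real k * (ln a + 1 - (\<Sum>m. frac_weight (m + 1))) + (\<Sum>i<k. defect (i + 1))
             - (\<Sum>n. shift_remainder k (n + 1)))"
    using shift_remainder_summable_bound(1)[OF assms]
    by (intro sums_diff sums_add sums_mult reciprocal_beatty_sums) (simp_all add: summable_sums)
  then show ?thesis by (simp add: shift_ratio_eq)
qed

lemma shift_ratio_mean_tendsto:
  "(\<lambda>k. 1 / real k * (\<Sum>n. shift_ratio k (n + 1))) \<longlonglongrightarrow> ln a + 1 - (\<Sum>m. frac_weight (m + 1))"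
proof -
  define D where "D = ln a + 1 - (\<Sum>m. frac_weight (m + 1))"
  have "(\<lambda>k. 1 / real k * (\<Sum>n. shift_ratio k (n + 1)) - D) \<longlonglongrightarrow> 0"
  proof (rule Lim_null_comparison)
    show "(\<lambda>k. (a + 1) * (harm k / real k)) \<longlonglongrightarrow> 0"
      using tendsto_mult_right_zero[OF harm_div_tendsto_0] by simp
    show "\<forall>\<^sub>F k in sequentially. norm (1 / real k * (\<Sum>n. shift_ratio k (n + 1)) - D)
            \<le> (a + 1) * (harm k / real k)"
    proof (rule eventually_sequentiallyI[of 1])
      fix k :: nat
      assume "1 \<le> k"
      define G where "G = (\<Sum>i<k. defect (i + 1))"
      define R where "R = (\<Sum>n. shift_remainder k (n + 1))"
      have "0 \<le> G" unfolding G_def by (intro sum_nonneg defect_nonneg) simp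
      have "G \<le> harm k"
        unfolding G_def harm_altdef
      proof (rule sum_mono)
        show "defect (i + 1) \<le> inverse (real (Suc i))" for i
          using defect_le[of "Suc i"] by (simp add: divide_inverse)
      qed
      have "0 \<le> R" unfolding R_def
        using shift_remainder_summable_bound(1)[OF \<open>1 \<le> k\<close>] shift_remainder_nonneg
        by (intro suminf_nonneg) simp_all
      have "R \<le> (a + 1) * harm k"
        unfolding R_def by (rule shift_remainder_summable_bound(2)[OF \<open>1 \<le> k\<close>])
      have "harm k \<le> (a + 1) * harm k"
        using gt_1 harm_nonneg[where 'a = real, of k] by (simp add: mult_le_cancel_right1)
      have "1 / real k * (\<Sum>n. shift_ratio k (n + 1)) - D = (G - R) / real k"
        using shift_ratio_sums[OF \<open>1 \<le> k\<close>] \<open>1 \<le> k\<close>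
        unfolding G_def R_def D_def by (simp add: sums_iff field_simps)
      also have "norm \<dots> \<le> (a + 1) * (harm k / real k)"
        using \<open>0 \<le> G\<close> \<open>G \<le> harm k\<close> \<open>0 \<le> R\<close> \<open>R \<le> (a + 1) * harm k\<close> \<open>harm k \<le> (a + 1) * harm k\<close>
        by (simp add: divide_right_mono abs_le_iff)
      finally show "norm (1 / real k * (\<Sum>n. shift_ratio k (n + 1)) - D) \<le> (a + 1) * (harm k / real k)" .
    qed
  qed
  then show ?thesis unfolding D_def by (rule LIM_zero_cancel)
qed

end

theorem mainTheorem1:
  fixes a b :: real
  assumes "a > 1" and "b > 1" and "a \<notin> \<rat>" and "b \<notin> \<rat>"
  shows "(\<forall>k\<ge>1. summable (\<lambda>n. ratio_term a b k (n + 1)))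
       \<and> summable (\<lambda>n. frac_term a b (n + 1))
       \<and> ((\<lambda>k. (1 / real k) * (\<Sum>n. ratio_term a b k (n + 1))) \<longlongrightarrow>
            ln (a / b) - (\<Sum>n. frac_term a b (n + 1))) sequentially"
proof -
  interpret A: irrational_beatty_seq a using assms by unfold_locales
  interpret B: irrational_beatty_seq b using assms by unfold_locales
  have ratio: "ratio_term a b k n = A.shift_ratio k n - B.shift_ratio k n" for k n
    by (simp add: ratio_term_def A.shift_ratio_def B.shift_ratio_def)
  have frac: "frac_term a b n = A.frac_weight n - B.frac_weight n" for n
    by (simp add: frac_term_def A.frac_weight_def B.frac_weight_def diff_divide_distrib)
  have ratio_sums: "(\<lambda>n. ratio_term a b k (n + 1))
      sums ((\<Sum>n. A.shift_ratio k (n + 1)) - (\<Sum>n. B.shift_ratio k (n + 1)))" if "1 \<le> k" for k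
    unfolding ratio using A.shift_ratio_sums[OF that] B.shift_ratio_sums[OF that]
    by (intro sums_diff) (simp_all add: sums_iff)
  have frac_sums: "(\<lambda>n. frac_term a b (n + 1))
      sums ((\<Sum>m. A.frac_weight (m + 1)) - (\<Sum>m. B.frac_weight (m + 1)))"
    unfolding frac using A.summable_frac_weight B.summable_frac_weight by (intro sums_diff summable_sums)
  have "(ln a + 1 - (\<Sum>m. A.frac_weight (m + 1))) - (ln b + 1 - (\<Sum>m. B.frac_weight (m + 1)))
      = ln (a / b) - (\<Sum>n. frac_term a b (n + 1))"
    using assms frac_sums by (simp add: sums_iff ln_div)
  then have "(\<lambda>k. 1 / real k * (\<Sum>n. A.shift_ratio k (n + 1)) - 1 / real k * (\<Sum>n. B.shift_ratio k (n + 1)))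
      \<longlonglongrightarrow> ln (a / b) - (\<Sum>n. frac_term a b (n + 1))"
    using tendsto_diff[OF A.shift_ratio_mean_tendsto B.shift_ratio_mean_tendsto] by simp
  moreover have "\<forall>\<^sub>F k in sequentially.
      1 / real k * (\<Sum>n. A.shift_ratio k (n + 1)) - 1 / real k * (\<Sum>n. B.shift_ratio k (n + 1))
      = 1 / real k * (\<Sum>n. ratio_term a b k (n + 1))"
    using ratio_sums by (intro eventually_sequentiallyI[of 1]) (simp add: sums_iff right_diff_distrib)
  ultimately show ?thesis
    using ratio_sums frac_sums by (auto simp: sums_iff intro: Lim_transform_eventually)
qed

end
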